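(* Let $p\in\mathbb{N}$, $0\le k\le\frac{p-1}{3}$ and $0\le t\le1$. Then $b^{\mathrm{refl}}_{p,k}(t,0)+b^{\mathrm{refl}}_{p,k}(1-t,0)+b^{\mathrm{refl}}_{p,k}(t,1-t)=0$.
   Context: With Jacobi polynomials $P_m^{(\alpha,\beta)}$ ($P_m^{(\alpha,\beta)}(1)=(\alpha+1)_m/m!$) and Legendre polynomials $P^{(0,0)}_k$, $b_{p,k}(x_1,x_2):=(x_1+x_2)^kP^{(0,2k+1)}_{p-k}(2(x_1+x_2)-1)P^{(0,0)}_k\!\left(\frac{x_1-x_2}{x_1+x_2}\right)$, and $b^{\mathrm{refl}}_{p,k}(x_1,x_2):=\frac13\big(2b_{p,2k}(x_1,x_2)-b_{p,2k}(x_2,1-x_1-x_2)-b_{p,2k}(1-x_1-x_2,x_1)\big)$. *)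

theory Defs
  imports "HOL-Analysis.Analysis"
begin

text \<open>Jacobi polynomial P_m^(a,b)(x), explicit formula
  sum_s binom(m+a, m-s) binom(m+b, s) ((x-1)/2)^s ((x+1)/2)^(m-s);
  normalisation P_m^(a,b)(1) = (a+1)_m / m!.\<close>
definition jacobi :: "nat \<Rightarrow> real \<Rightarrow> real \<Rightarrow> real \<Rightarrow> real" where
  "jacobi m a b x = (\<Sum>s\<le>m. ((real m + a) gchoose (m - s)) * ((real m + b) gchoose s)
        * ((x - 1) / 2) ^ s * ((x + 1) / 2) ^ (m - s))"

definition legendre :: "nat \<Rightarrow> real \<Rightarrow> real" where
  "legendre k x = jacobi k 0 0 x"

text \<open>Homogenised Legendre polynomial: z^k * P_k(y/z), as the polynomial in (y,z)
  obtained by multiplying the explicit formula through by z^k (this is the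
  polynomial meaning of (x1+x2)^k P_k((x1-x2)/(x1+x2)), also at x1+x2 = 0).\<close>
definition legendre_hom :: "nat \<Rightarrow> real \<Rightarrow> real \<Rightarrow> real" where
  "legendre_hom k y z = (\<Sum>s\<le>k. (real k gchoose (k - s)) * (real k gchoose s)
        * ((y - z) / 2) ^ s * ((y + z) / 2) ^ (k - s))"

definition b_poly :: "nat \<Rightarrow> nat \<Rightarrow> real \<Rightarrow> real \<Rightarrow> real" where
  "b_poly p k x1 x2 = jacobi (p - k) 0 (2 * real k + 1) (2 * (x1 + x2) - 1)
       * legendre_hom k (x1 - x2) (x1 + x2)"

definition b_refl :: "nat \<Rightarrow> nat \<Rightarrow> real \<Rightarrow> real \<Rightarrow> real" where
  "b_refl p k x1 x2 = (1/3) * (2 * b_poly p (2*k) x1 x2 - b_poly p (2*k) x2 (1 - x1 - x2)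
       - b_poly p (2*k) (1 - x1 - x2) x1)"


end

theory Submission
  imports Defs
begin

text \<open>Legendre polynomials of even degree are even, so b_poly p k is symmetric in its two
  arguments for even k. Each of the points (t,0), (1-t,0), (t,1-t) enters the sum with weight 2,
  and its two cyclic rotations with weight -1; up to swapping coordinates, the six rotated points
  are each of the three points twice, so everything cancels.\<close>

lemma legendre_hom_uminus:
  "legendre_hom n (- y) z = (-1) ^ n * legendre_hom n y z"
proof -
  have term_flip: "(real n gchoose s) * (real n gchoose (n - s))
        * ((- y - z) / 2) ^ (n - s) * ((- y + z) / 2) ^ s
      = (-1) ^ n * ((real n gchoose (n - s)) * (real n gchoose s)
        * ((y - z) / 2) ^ s * ((y + z) / 2) ^ (n - s))" if "s \<le> n" for s
  proof -
    have minus_sum: "((- y - z) / 2) ^ (n - s) = (-1) ^ (n - s) * ((y + z) / 2) ^ (n - s)"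
      and minus_diff: "((- y + z) / 2) ^ s = (-1) ^ s * ((y - z) / 2) ^ s"
      by (simp_all add: power_minus [symmetric] minus_divide_left)
    have sign: "(-1::real) ^ (n - s) * (-1) ^ s = (-1) ^ n"
      using that by (simp add: power_add [symmetric])
    show ?thesis
      unfolding minus_sum minus_diff sign [symmetric] by (simp add: algebra_simps)
  qed
  have "legendre_hom n (- y) z = (\<Sum>s\<le>n. (real n gchoose s) * (real n gchoose (n - s))
        * ((- y - z) / 2) ^ (n - s) * ((- y + z) / 2) ^ s)"
    unfolding legendre_hom_def atLeast0AtMost [symmetric]
    by (subst sum.atLeastAtMost_rev) (intro sum.cong refl, auto)
  also have "\<dots> = (-1) ^ n * legendre_hom n y z"
    unfolding legendre_hom_def sum_distrib_left by (rule sum.cong [OF refl], rule term_flip) simp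
  finally show ?thesis .
qed

lemma b_poly_swap:
  assumes "even k"
  shows "b_poly p k x1 x2 = b_poly p k x2 x1"
proof -
  have "legendre_hom k (x2 - x1) (x2 + x1) = legendre_hom k (x1 - x2) (x1 + x2)"
    using legendre_hom_uminus [of k "x1 - x2" "x1 + x2"] assms by (simp add: add.commute)
  then show ?thesis
    unfolding b_poly_def by (simp add: add.commute)
qed

theorem lemma32:
  fixes p k :: nat and t :: real
  assumes "3 * real k \<le> real p - 1"
    and "0 \<le> t" and "t \<le> 1"
  shows "b_refl p k t 0 + b_refl p k (1 - t) 0 + b_refl p k t (1 - t) = 0"
proof -
  have "b_poly p (2*k) 0 (1 - t) = b_poly p (2*k) (1 - t) 0"
       "b_poly p (2*k) 0 t = b_poly p (2*k) t 0"
       "b_poly p (2*k) (1 - t) t = b_poly p (2*k) t (1 - t)"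
    by (simp_all add: b_poly_swap)
  then show ?thesis
    unfolding b_refl_def by (simp add: field_simps)
qed

end
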